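(* Let $A=(Q_A,\Sigma,\delta_A,q_A,F_A)$ and $B=(Q_B,\Sigma,\delta_B,q_B,F_B)$ be NFAs such that $L(A)\cap L(B)=\emptyset$. Then there is a pattern of $A$ and $B$ if and only if there is an infinite tower of prefixes between $L(A)$ and $L(B)$.
   Context: Here $q_A,q_B$ are the initial states and $F_A,F_B$ the accepting states. The product automaton $A\times B$ has state set $Q_A\times Q_B$, initial state $(q_A,q_B)$, and transitions $(p,q)\xrightarrow{a}(p',q')$ whenever $p'\in\delta_A(p,a)$ and $q'\in\delta_B(q,a)$. A tuple $(S,\sigma,\sigma_1,\sigma_2,\tau,\tau_1,\tau_2)$ is a pattern of $A$ and $B$ if $S$ is a strongly connected component of the transition graph of $A\times B$ containing at least one edge, $\sigma,\sigma_1,\sigma_2,\tau,\tau_1,\tau_2$ are states of $A\times B$ such that: $\sigma_1\in F_A\times Q_B$ and $\tau_1\in Q_A\times F_B$; $\sigma,\sigma_2,\tau,\tau_2$ belong to $S$; there is a string $x$ such that both $\sigma_1$ and $\sigma_2$ are reachable from $\sigma$ under $x$; there is a string $y$ such that both $\tau_1$ and $\tau_2$ are reachable from $\tau$ under $y$; and $S$ is reachable from the initial state $(q_A,q_B)$. A string $v$ is a prefix of $w$, written $v\le w$, if $w=vu$ for some $u$. An infinite tower of prefixes between $K$ and $L$ is an infinite sequence $(w_i)_{i\ge1}$ with $w_1\in K\cup L$ and, for all $i$, $w_i\le w_{i+1}$, $w_i\in K$ implies $w_{i+1}\in L$, and $w_i\in L$ implies $w_{i+1}\in K$. *)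

theory Defs
  imports Main "HOL-Library.Sublist"
begin

record ('q, 'a) nfa =
  states :: "'q set"
  delta  :: "'q \<Rightarrow> 'a \<Rightarrow> 'q set"
  init   :: 'q
  final  :: "'q set"

definition nfa :: "'a set \<Rightarrow> ('q, 'a) nfa \<Rightarrow> bool" where
  "nfa \<Sigma> A \<longleftrightarrow> finite \<Sigma> \<and> finite (states A) \<and> init A \<in> states A \<and>
     final A \<subseteq> states A \<and>
     (\<forall>q\<in>states A. \<forall>a\<in>\<Sigma>. delta A q a \<subseteq> states A)"

fun delta_star :: "('q, 'a) nfa \<Rightarrow> 'q \<Rightarrow> 'a list \<Rightarrow> 'q set" where
  "delta_star A q [] = {q}"
| "delta_star A q (a # w) = (\<Union>p\<in>delta A q a. delta_star A p w)"

definition lang :: "'a set \<Rightarrow> ('q, 'a) nfa \<Rightarrow> 'a list set" where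
  "lang \<Sigma> A = {w. w \<in> lists \<Sigma> \<and> delta_star A (init A) w \<inter> final A \<noteq> {}}"

definition prod_nfa :: "('p, 'a) nfa \<Rightarrow> ('q, 'a) nfa \<Rightarrow> ('p \<times> 'q, 'a) nfa" where
  "prod_nfa A B = \<lparr> states = states A \<times> states B,
     delta = (\<lambda>(p, q) a. delta A p a \<times> delta B q a),
     init = (init A, init B),
     final = final A \<times> final B \<rparr>"

definition edges :: "'a set \<Rightarrow> ('q, 'a) nfa \<Rightarrow> ('q \<times> 'q) set" where
  "edges \<Sigma> A = {(s, t). s \<in> states A \<and> (\<exists>a\<in>\<Sigma>. t \<in> delta A s a)}"

definition is_scc :: "'a set \<Rightarrow> ('q, 'a) nfa \<Rightarrow> 'q set \<Rightarrow> bool" where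
  "is_scc \<Sigma> A S \<longleftrightarrow> S \<noteq> {} \<and> S \<subseteq> states A \<and>
     (\<forall>s\<in>S. \<forall>t\<in>S. (s, t) \<in> (edges \<Sigma> A)\<^sup>*) \<and>
     (\<forall>s\<in>S. \<forall>t\<in>states A. (s, t) \<in> (edges \<Sigma> A)\<^sup>* \<and> (t, s) \<in> (edges \<Sigma> A)\<^sup>* \<longrightarrow> t \<in> S)"

definition is_pattern ::
  "'a set \<Rightarrow> ('p, 'a) nfa \<Rightarrow> ('q, 'a) nfa \<Rightarrow> ('p \<times> 'q) set \<Rightarrow>
   'p \<times> 'q \<Rightarrow> 'p \<times> 'q \<Rightarrow> 'p \<times> 'q \<Rightarrow> 'p \<times> 'q \<Rightarrow> 'p \<times> 'q \<Rightarrow> 'p \<times> 'q \<Rightarrow> bool" where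
  "is_pattern \<Sigma> A B S \<sigma> \<sigma>1 \<sigma>2 \<tau> \<tau>1 \<tau>2 \<longleftrightarrow>
     (let P = prod_nfa A B in
       is_scc \<Sigma> P S \<and> (\<exists>s\<in>S. \<exists>t\<in>S. (s, t) \<in> edges \<Sigma> P) \<and>
       \<sigma>1 \<in> final A \<times> states B \<and> \<tau>1 \<in> states A \<times> final B \<and>
       \<sigma> \<in> S \<and> \<sigma>2 \<in> S \<and> \<tau> \<in> S \<and> \<tau>2 \<in> S \<and>
       (\<exists>x\<in>lists \<Sigma>. \<sigma>1 \<in> delta_star P \<sigma> x \<and> \<sigma>2 \<in> delta_star P \<sigma> x) \<and>
       (\<exists>y\<in>lists \<Sigma>. \<tau>1 \<in> delta_star P \<tau> y \<and> \<tau>2 \<in> delta_star P \<tau> y) \<and>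
       (\<exists>s\<in>S. (init P, s) \<in> (edges \<Sigma> P)\<^sup>*))"

definition infinite_tower :: "'a list set \<Rightarrow> 'a list set \<Rightarrow> (nat \<Rightarrow> 'a list) \<Rightarrow> bool" where
  "infinite_tower K L w \<longleftrightarrow> w 0 \<in> K \<union> L \<and>
     (\<forall>i. prefix (w i) (w (Suc i)) \<and>
          (w i \<in> K \<longrightarrow> w (Suc i) \<in> L) \<and> (w i \<in> L \<longrightarrow> w (Suc i) \<in> K))"

end

(*
  A pattern yields a tower directly: c = x z1 y z2 is a cycle at sigma in the product, so with
  u leading from the initial state to sigma, the words u c^n x are accepted by A and the words
  u c^n x z1 y by B, and they alternate as prefixes of each other.

  Conversely, by disjointness the words of a tower grow strictly, so they are prefixes of one
  infinite word alpha with infinitely many prefixes in each language. By Koenig's lemma each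
  automaton has a run on alpha from every state of which infinitely many accepting prefixes are
  still reachable. The product of the two runs visits some state sigma infinitely often and hence
  eventually stays in the SCC of sigma; reading on from sigma to an accepted prefix of each kind
  gives a pattern with tau = sigma.
*)
theory Submission
  imports Defs "HOL-Library.Infinite_Set"
begin

lemma transp_chain_le:
  assumes "reflp R" "transp R" "\<And>k. R (f k) (f (Suc k))" "k \<le> n"
  shows "R (f k) (f n)"
  using assms(4)
proof (induction rule: dec_induct)
  case base
  show ?case using assms(1) by (simp add: reflpD)
next
  case (step n)
  then show ?case using assms(2,3) by (blast dest: transpD)
qed

lemma rtrancl_chain_le:
  assumes "\<And>k. (f k, f (Suc k)) \<in> r" "k \<le> n"
  shows "(f k, f n) \<in> r\<^sup>*"
proof (rule transp_chain_le[where R = "\<lambda>s t. (s, t) \<in> r\<^sup>*"])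
  show "reflp (\<lambda>s t. (s, t) \<in> r\<^sup>*)" "transp (\<lambda>s t. (s, t) \<in> r\<^sup>*)"
    by (auto simp: reflp_def transp_def)
qed (use assms in auto)

lemma delta_star_append:
  "delta_star M q (u @ v) = (\<Union>p\<in>delta_star M q u. delta_star M p v)"
  by (induction u arbitrary: q) auto

lemma delta_star_trans:
  assumes "p \<in> delta_star M q u" "r \<in> delta_star M p v"
  shows "r \<in> delta_star M q (u @ v)"
  using assms by (auto simp: delta_star_append)

lemma delta_star_prod_nfa:
  "delta_star (prod_nfa A B) (p, q) w = delta_star A p w \<times> delta_star B q w"
  by (induction w arbitrary: p q) (auto simp: prod_nfa_def)

lemma lang_if_prod_nfa_reaches:
  assumes "s \<in> delta_star (prod_nfa A B) (init (prod_nfa A B)) w" "w \<in> lists \<Sigma>"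
  shows "fst s \<in> final A \<Longrightarrow> w \<in> lang \<Sigma> A" "snd s \<in> final B \<Longrightarrow> w \<in> lang \<Sigma> B"
proof -
  have "init (prod_nfa A B) = (init A, init B)" by (simp add: prod_nfa_def)
  then show "fst s \<in> final A \<Longrightarrow> w \<in> lang \<Sigma> A" "snd s \<in> final B \<Longrightarrow> w \<in> lang \<Sigma> B"
    using assms by (cases s, auto simp: lang_def delta_star_prod_nfa)+
qed

lemma delta_star_concat_replicate:
  assumes "q \<in> delta_star M q c"
  shows "q \<in> delta_star M q (concat (replicate n c))"
  by (induction n) (auto intro: delta_star_trans[OF assms])

lemma rtrancl_edges_imp_word:
  assumes "(s, t) \<in> (edges \<Sigma> M)\<^sup>*"
  shows "\<exists>u\<in>lists \<Sigma>. t \<in> delta_star M s u"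
  using assms
proof (induction rule: rtrancl_induct)
  case base
  show ?case by (intro bexI[of _ "[]"]) auto
next
  case (step t t')
  then obtain u where "u \<in> lists \<Sigma>" "t \<in> delta_star M s u" by blast
  moreover obtain a where "a \<in> \<Sigma>" "t' \<in> delta M t a"
    using step(2) by (auto simp: edges_def)
  ultimately show ?case by (intro bexI[of _ "u @ [a]"]) (auto simp: delta_star_append)
qed

definition scc_of :: "'a set \<Rightarrow> ('q, 'a) nfa \<Rightarrow> 'q \<Rightarrow> 'q set" where
  "scc_of \<Sigma> M s = {t \<in> states M. (s, t) \<in> (edges \<Sigma> M)\<^sup>* \<and> (t, s) \<in> (edges \<Sigma> M)\<^sup>*}"

lemma is_scc_scc_of:
  assumes "s \<in> states M"
  shows "is_scc \<Sigma> M (scc_of \<Sigma> M s)"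
  using assms unfolding is_scc_def scc_of_def by (auto intro: rtrancl_trans)

lemma path_eventually_in_scc:
  assumes fin: "finite (states M)" and states: "\<And>k. \<rho> k \<in> states M"
    and step: "\<And>k. (\<rho> k, \<rho> (Suc k)) \<in> edges \<Sigma> M"
  obtains k0 where "\<And>n. k0 \<le> n \<Longrightarrow> \<rho> n \<in> scc_of \<Sigma> M (\<rho> k0)"
proof -
  have "range \<rho> \<subseteq> states M" using states by auto
  then have "finite (range \<rho>)" using fin by (rule finite_subset)
  then obtain k0 where recur: "infinite {k. \<rho> k = \<rho> k0}"
    using pigeonhole_infinite[OF infinite_UNIV_nat] by auto
  have "\<rho> n \<in> scc_of \<Sigma> M (\<rho> k0)" if "k0 \<le> n" for n
  proof -
    obtain k where "n \<le> k" "\<rho> k = \<rho> k0"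
      using recur unfolding infinite_nat_iff_unbounded_le by blast
    then have "(\<rho> n, \<rho> k0) \<in> (edges \<Sigma> M)\<^sup>*" using rtrancl_chain_le[of \<rho>, OF step] by metis
    moreover have "(\<rho> k0, \<rho> n) \<in> (edges \<Sigma> M)\<^sup>*" using rtrancl_chain_le[of \<rho>, OF step that] .
    ultimately show ?thesis using states[of n] unfolding scc_of_def by simp
  qed
  then show thesis by (rule that)
qed

definition is_run :: "('q, 'a) nfa \<Rightarrow> (nat \<Rightarrow> 'a) \<Rightarrow> (nat \<Rightarrow> 'q) \<Rightarrow> bool" where
  "is_run M \<alpha> \<rho> \<longleftrightarrow> (\<forall>k. \<rho> (Suc k) \<in> delta M (\<rho> k) (\<alpha> k))"

lemma run_delta_star:
  assumes "is_run M \<alpha> \<rho>" "k \<le> n"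
  shows "\<rho> n \<in> delta_star M (\<rho> k) (map \<alpha> [k..<n])"
  using assms(2)
proof (induction rule: dec_induct)
  case (step n)
  then show ?case using assms(1) by (auto simp: is_run_def delta_star_append)
qed simp

lemma run_prod_nfa:
  assumes "is_run A \<alpha> \<rho>A" "is_run B \<alpha> \<rho>B"
  shows "is_run (prod_nfa A B) \<alpha> (\<lambda>k. (\<rho>A k, \<rho>B k))"
  using assms by (simp add: is_run_def prod_nfa_def)

lemma koenig_run:
  assumes M: "nfa \<Sigma> M" and \<alpha>: "\<And>k. \<alpha> k \<in> \<Sigma>"
    and acc: "infinite {n. map \<alpha> [0..<n] \<in> lang \<Sigma> M}"
  obtains \<rho> where "\<rho> 0 = init M" "is_run M \<alpha> \<rho>" "\<And>k. \<rho> k \<in> states M"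
    "\<And>k. infinite {n. delta_star M (\<rho> k) (map \<alpha> [k..<n]) \<inter> final M \<noteq> {}}"
proof -
  define live where
    "live k p \<longleftrightarrow> infinite {n. delta_star M p (map \<alpha> [k..<n]) \<inter> final M \<noteq> {}}" for k p
  define P where "P k p \<longleftrightarrow> p \<in> states M \<and> live k p \<and> (k = 0 \<longrightarrow> p = init M)" for k p
  have "live 0 (init M)"
    using acc unfolding live_def lang_def by (auto elim: infinite_super)
  then have P0: "P 0 (init M)" using M unfolding P_def nfa_def by auto
  have P_Suc: "\<exists>q. P (Suc k) q \<and> q \<in> delta M p (\<alpha> k)" if "P k p" for k p
  proof -
    let ?succ = "delta M p (\<alpha> k)"
    let ?acc = "\<lambda>k p. {n. delta_star M p (map \<alpha> [k..<n]) \<inter> final M \<noteq> {}}"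
    have succ_states: "?succ \<subseteq> states M" using M that \<alpha> unfolding P_def nfa_def by blast
    then have "finite ?succ" using M unfolding nfa_def by (blast intro: finite_subset)
    have "?acc k p - {..k} \<subseteq> (\<Union>q\<in>?succ. ?acc (Suc k) q)"
      by (force simp: upt_conv_Cons)
    moreover have "infinite (?acc k p - {..k})" using that unfolding P_def live_def by simp
    ultimately have "infinite (\<Union>q\<in>?succ. ?acc (Suc k) q)" by (rule infinite_super)
    then obtain q where "q \<in> ?succ" "live (Suc k) q"
      using \<open>finite ?succ\<close> unfolding live_def by blast
    then show ?thesis using succ_states unfolding P_def by auto
  qed
  obtain \<rho> where \<rho>: "\<forall>k. P k (\<rho> k) \<and> \<rho> (Suc k) \<in> delta M (\<rho> k) (\<alpha> k)"
    using dependent_nat_choice[of P "\<lambda>k p q. q \<in> delta M p (\<alpha> k)"] P0 P_Suc by blast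
  show thesis by (rule that[of \<rho>]) (use \<rho> in \<open>auto simp: P_def live_def is_run_def\<close>)
qed

lemma pattern_if_infinitely_many_accepted_prefixes:
  assumes A: "nfa \<Sigma> A" and B: "nfa \<Sigma> B" and \<alpha>: "\<And>k. \<alpha> k \<in> \<Sigma>"
    and accA: "infinite {n. map \<alpha> [0..<n] \<in> lang \<Sigma> A}"
    and accB: "infinite {n. map \<alpha> [0..<n] \<in> lang \<Sigma> B}"
  shows "\<exists>S \<sigma> \<sigma>1 \<sigma>2 \<tau> \<tau>1 \<tau>2. is_pattern \<Sigma> A B S \<sigma> \<sigma>1 \<sigma>2 \<tau> \<tau>1 \<tau>2"
proof -
  obtain \<rho>A where \<rho>A: "\<rho>A 0 = init A" "is_run A \<alpha> \<rho>A" "\<And>k. \<rho>A k \<in> states A"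
    "\<And>k. infinite {n. delta_star A (\<rho>A k) (map \<alpha> [k..<n]) \<inter> final A \<noteq> {}}"
    using koenig_run[OF A \<alpha> accA] by blast
  obtain \<rho>B where \<rho>B: "\<rho>B 0 = init B" "is_run B \<alpha> \<rho>B" "\<And>k. \<rho>B k \<in> states B"
    "\<And>k. infinite {n. delta_star B (\<rho>B k) (map \<alpha> [k..<n]) \<inter> final B \<noteq> {}}"
    using koenig_run[OF B \<alpha> accB] by blast
  define P where "P = prod_nfa A B"
  define \<rho> where "\<rho> k = (\<rho>A k, \<rho>B k)" for k
  have run: "is_run P \<alpha> \<rho>" unfolding P_def \<rho>_def using run_prod_nfa[OF \<rho>A(2) \<rho>B(2)] .
  have states: "\<rho> k \<in> states P" for k using \<rho>A(3) \<rho>B(3) by (simp add: \<rho>_def P_def prod_nfa_def)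
  have step: "(\<rho> k, \<rho> (Suc k)) \<in> edges \<Sigma> P" for k
    using states[of k] run \<alpha>[of k] by (auto simp: edges_def is_run_def)
  have "finite (states P)" using A B by (simp add: P_def prod_nfa_def nfa_def)
  then obtain k0 where later: "\<And>n. k0 \<le> n \<Longrightarrow> \<rho> n \<in> scc_of \<Sigma> P (\<rho> k0)"
    using path_eventually_in_scc states step by blast
  define S where "S = scc_of \<Sigma> P (\<rho> k0)"
  obtain nA pA where nA: "k0 \<le> nA" "pA \<in> final A" "pA \<in> delta_star A (\<rho>A k0) (map \<alpha> [k0..<nA])"
    using \<rho>A(4)[of k0] unfolding infinite_nat_iff_unbounded_le by blast
  obtain nB qB where nB: "k0 \<le> nB" "qB \<in> final B" "qB \<in> delta_star B (\<rho>B k0) (map \<alpha> [k0..<nB])"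
    using \<rho>B(4)[of k0] unfolding infinite_nat_iff_unbounded_le by blast
  have "init P = \<rho> 0" using \<rho>A(1) \<rho>B(1) by (simp add: P_def prod_nfa_def \<rho>_def)
  then have "(init P, \<rho> k0) \<in> (edges \<Sigma> P)\<^sup>*" using rtrancl_chain_le[of \<rho>, OF step] by simp
  moreover have "(pA, \<rho>B nA) \<in> delta_star P (\<rho> k0) (map \<alpha> [k0..<nA])"
    using nA run_delta_star[OF \<rho>B(2) nA(1)] by (simp add: P_def \<rho>_def delta_star_prod_nfa)
  moreover have "(\<rho>A nB, qB) \<in> delta_star P (\<rho> k0) (map \<alpha> [k0..<nB])"
    using nB run_delta_star[OF \<rho>A(2) nB(1)] by (simp add: P_def \<rho>_def delta_star_prod_nfa)
  moreover have "map \<alpha> [k0..<n] \<in> lists \<Sigma>" for n using \<alpha> by auto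
  ultimately have "is_pattern \<Sigma> A B S (\<rho> k0) (pA, \<rho>B nA) (\<rho> nA) (\<rho> k0) (\<rho>A nB, qB) (\<rho> nB)"
    unfolding is_pattern_def Let_def P_def[symmetric] S_def
    using is_scc_scc_of[OF states] later[of k0] later[of "Suc k0"] later[OF nA(1)] later[OF nB(1)]
      step[of k0] \<rho>A(3) \<rho>B(3) nA(2) nB(2) run_delta_star[OF run nA(1)] run_delta_star[OF run nB(1)]
    by (fastforce simp: P_def prod_nfa_def)
  then show ?thesis by blast
qed

lemma prefix_chain_limit:
  assumes chain: "\<And>i. prefix (w i) (w (Suc i))" and long: "\<And>i. i \<le> length (w i)"
  shows "w i = map (\<lambda>k. w (Suc k) ! k) [0..<length (w i)]"
proof (rule nth_equalityI)
  have mono: "prefix (w i) (w j)" if "i \<le> j" for i j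
    using transp_chain_le[of prefix w, OF _ _ chain that] by (simp add: reflp_def transp_def)
  fix k assume k: "k < length (w i)"
  let ?j = "max i (Suc k)"
  have "w i ! k = w ?j ! k"
    using mono[of i ?j] k by (auto simp: prefix_def nth_append)
  also have "\<dots> = w (Suc k) ! k"
    using mono[of "Suc k" ?j] long[of "Suc k"] by (auto simp: prefix_def nth_append)
  finally show "w i ! k = map (\<lambda>k. w (Suc k) ! k) [0..<length (w i)] ! k" using k by simp
qed simp

lemma infinite_tower_mem:
  assumes "infinite_tower K L w"
  shows "w i \<in> K \<union> L"
  using assms by (induction i) (auto simp: infinite_tower_def)

lemma infinite_tower_length:
  assumes tower: "infinite_tower K L w" and disj: "K \<inter> L = {}"
  shows "i \<le> length (w i)"
proof (induction i)
  case (Suc i)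
  have step: "prefix (w i) (w (Suc i))" "w i \<in> K \<Longrightarrow> w (Suc i) \<in> L" "w i \<in> L \<Longrightarrow> w (Suc i) \<in> K"
    using tower unfolding infinite_tower_def by blast+
  have "w i \<noteq> w (Suc i)" using infinite_tower_mem[OF tower, of i] step(2,3) disj by auto
  then have "strict_prefix (w i) (w (Suc i))" using step(1) by (simp add: strict_prefix_def)
  then have "length (w i) < length (w (Suc i))" by (rule prefix_length_less)
  then show ?case using Suc by simp
qed simp

lemma infinite_tower_frequently:
  assumes tower: "infinite_tower K L w"
  shows "infinite {i. w i \<in> K}" "infinite {i. w i \<in> L}"
proof -
  have "w m \<in> K \<or> w (Suc m) \<in> K" "w m \<in> L \<or> w (Suc m) \<in> L" for m
    using infinite_tower_mem[OF tower, of m] tower unfolding infinite_tower_def by blast+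
  then have "\<exists>n\<ge>m. w n \<in> K" "\<exists>n\<ge>m. w n \<in> L" for m
    using le_SucI[OF order_refl] order_refl by blast+
  then show "infinite {i. w i \<in> K}" "infinite {i. w i \<in> L}"
    unfolding infinite_nat_iff_unbounded_le by simp_all
qed

lemma infinite_tower_limit_word:
  assumes tower: "infinite_tower K L w" and disj: "K \<inter> L = {}"
    and words: "K \<union> L \<subseteq> lists \<Sigma>"
  obtains \<alpha> where "\<And>k. \<alpha> k \<in> \<Sigma>"
    "infinite {n. map \<alpha> [0..<n] \<in> K}" "infinite {n. map \<alpha> [0..<n] \<in> L}"
proof
  define \<alpha> where "\<alpha> k = w (Suc k) ! k" for k
  have long: "i \<le> length (w i)" for i by (rule infinite_tower_length[OF tower disj])
  have limit: "w i = map \<alpha> [0..<length (w i)]" for i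
    unfolding \<alpha>_def using tower long by (intro prefix_chain_limit) (auto simp: infinite_tower_def)
  show "\<alpha> k \<in> \<Sigma>" for k
    using infinite_tower_mem[OF tower, of "Suc k"] long[of "Suc k"] words
    unfolding \<alpha>_def by (auto dest!: nth_mem)
  have "infinite {n. map \<alpha> [0..<n] \<in> X}" if "infinite {i. w i \<in> X}" for X
    unfolding infinite_nat_iff_unbounded_le
  proof
    fix m
    obtain i where "m \<le> i" "w i \<in> X"
      using \<open>infinite {i. w i \<in> X}\<close> unfolding infinite_nat_iff_unbounded_le by blast
    then show "\<exists>n\<ge>m. n \<in> {n. map \<alpha> [0..<n] \<in> X}"
      using long[of i] limit[of i] by (intro exI[of _ "length (w i)"]) auto
  qed
  then show "infinite {n. map \<alpha> [0..<n] \<in> K}" "infinite {n. map \<alpha> [0..<n] \<in> L}"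
    using infinite_tower_frequently[OF tower] by blast+
qed

lemma infinite_tower_interleave:
  assumes disj: "K \<inter> L = {}" and "\<And>n. a n \<in> K" "\<And>n. b n \<in> L"
    and "\<And>n. prefix (a n) (b n)" "\<And>n. prefix (b n) (a (Suc n))"
  shows "infinite_tower K L (\<lambda>i. if even i then a (i div 2) else b (i div 2))"
  using assms unfolding infinite_tower_def by auto

lemma tower_if_pattern:
  assumes disj: "lang \<Sigma> A \<inter> lang \<Sigma> B = {}"
    and pat: "is_pattern \<Sigma> A B S \<sigma> \<sigma>1 \<sigma>2 \<tau> \<tau>1 \<tau>2"
  shows "\<exists>w. infinite_tower (lang \<Sigma> A) (lang \<Sigma> B) w"
proof -
  define P where "P = prod_nfa A B"
  have scc: "is_scc \<Sigma> P S" and \<sigma>1: "\<sigma>1 \<in> final A \<times> states B" and \<tau>1: "\<tau>1 \<in> states A \<times> final B"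
    and in_S: "\<sigma> \<in> S" "\<sigma>2 \<in> S" "\<tau> \<in> S" "\<tau>2 \<in> S"
    and x_ex: "\<exists>x\<in>lists \<Sigma>. \<sigma>1 \<in> delta_star P \<sigma> x \<and> \<sigma>2 \<in> delta_star P \<sigma> x"
    and y_ex: "\<exists>y\<in>lists \<Sigma>. \<tau>1 \<in> delta_star P \<tau> y \<and> \<tau>2 \<in> delta_star P \<tau> y"
    and reach_S: "\<exists>s\<in>S. (init P, s) \<in> (edges \<Sigma> P)\<^sup>*"
    using pat unfolding is_pattern_def Let_def P_def by auto
  obtain x where x: "x \<in> lists \<Sigma>" "\<sigma>1 \<in> delta_star P \<sigma> x" "\<sigma>2 \<in> delta_star P \<sigma> x"
    using x_ex by blast
  obtain y where y: "y \<in> lists \<Sigma>" "\<tau>1 \<in> delta_star P \<tau> y" "\<tau>2 \<in> delta_star P \<tau> y"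
    using y_ex by blast
  obtain s0 where s0: "s0 \<in> S" "(init P, s0) \<in> (edges \<Sigma> P)\<^sup>*"
    using reach_S by blast
  have connected: "(s, t) \<in> (edges \<Sigma> P)\<^sup>*" if "s \<in> S" "t \<in> S" for s t
    using scc that unfolding is_scc_def by blast
  obtain u where u: "u \<in> lists \<Sigma>" "\<sigma> \<in> delta_star P (init P) u"
    using rtrancl_edges_imp_word[OF rtrancl_trans[OF s0(2) connected[OF s0(1) in_S(1)]]] by blast
  obtain z1 where z1: "z1 \<in> lists \<Sigma>" "\<tau> \<in> delta_star P \<sigma>2 z1"
    using rtrancl_edges_imp_word[OF connected[OF in_S(2,3)]] by blast
  obtain z2 where z2: "z2 \<in> lists \<Sigma>" "\<sigma> \<in> delta_star P \<tau>2 z2"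
    using rtrancl_edges_imp_word[OF connected[OF in_S(4,1)]] by blast
  define c where "c = x @ z1 @ y @ z2"
  have cycle: "\<sigma> \<in> delta_star P \<sigma> c"
    unfolding c_def using x(3) z1(2) y(3) z2(2) by (intro delta_star_trans)
  have loop: "\<sigma> \<in> delta_star P (init P) (u @ concat (replicate n c))" for n
    using delta_star_trans[OF u(2) delta_star_concat_replicate[OF cycle]] .
  define a where "a n = u @ concat (replicate n c) @ x" for n
  define b where "b n = a n @ z1 @ y" for n
  have "c \<in> lists \<Sigma>" using x y z1 z2 by (simp add: c_def)
  then have words: "a n \<in> lists \<Sigma>" "b n \<in> lists \<Sigma>" for n
    using u x y z1 unfolding a_def b_def by (auto simp: set_replicate_conv_if split: if_splits)
  have reach: "\<sigma>1 \<in> delta_star P (init P) (a n)" "\<tau>1 \<in> delta_star P (init P) (b n)" for n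
    using loop[of n] x(2,3) z1(2) y(2) unfolding a_def b_def append_assoc[symmetric]
    by (blast intro: delta_star_trans)+
  have "a n \<in> lang \<Sigma> A" "b n \<in> lang \<Sigma> B" for n
    using lang_if_prod_nfa_reaches(1)[OF reach(1)[unfolded P_def] words(1)]
      lang_if_prod_nfa_reaches(2)[OF reach(2)[unfolded P_def] words(2)] \<sigma>1 \<tau>1 by auto
  moreover have "prefix (a n) (b n)" for n unfolding b_def by simp
  moreover have "prefix (b n) (a (Suc n))" for n
  proof -
    have "concat (replicate (Suc n) c) = concat (replicate n c) @ c" by (induction n) auto
    then show ?thesis unfolding a_def b_def c_def by simp
  qed
  ultimately show ?thesis using infinite_tower_interleave[OF disj] by blast
qed

theorem theorem18:
  fixes \<Sigma> :: "'a set" and A :: "('p, 'a) nfa" and B :: "('q, 'a) nfa"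
  assumes "nfa \<Sigma> A" and "nfa \<Sigma> B"
    and "lang \<Sigma> A \<inter> lang \<Sigma> B = {}"
  shows "(\<exists>S \<sigma> \<sigma>1 \<sigma>2 \<tau> \<tau>1 \<tau>2. is_pattern \<Sigma> A B S \<sigma> \<sigma>1 \<sigma>2 \<tau> \<tau>1 \<tau>2) \<longleftrightarrow>
         (\<exists>w. infinite_tower (lang \<Sigma> A) (lang \<Sigma> B) w)"
proof
  assume "\<exists>S \<sigma> \<sigma>1 \<sigma>2 \<tau> \<tau>1 \<tau>2. is_pattern \<Sigma> A B S \<sigma> \<sigma>1 \<sigma>2 \<tau> \<tau>1 \<tau>2"
  then show "\<exists>w. infinite_tower (lang \<Sigma> A) (lang \<Sigma> B) w"
    using tower_if_pattern[OF assms(3)] by blast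
next
  assume "\<exists>w. infinite_tower (lang \<Sigma> A) (lang \<Sigma> B) w"
  then obtain w where "infinite_tower (lang \<Sigma> A) (lang \<Sigma> B) w" ..
  moreover have "lang \<Sigma> A \<union> lang \<Sigma> B \<subseteq> lists \<Sigma>" by (auto simp: lang_def)
  ultimately obtain \<alpha> where "\<And>k. \<alpha> k \<in> \<Sigma>"
    "infinite {n. map \<alpha> [0..<n] \<in> lang \<Sigma> A}" "infinite {n. map \<alpha> [0..<n] \<in> lang \<Sigma> B}"
    using infinite_tower_limit_word assms(3) by blast
  then show "\<exists>S \<sigma> \<sigma>1 \<sigma>2 \<tau> \<tau>1 \<tau>2. is_pattern \<Sigma> A B S \<sigma> \<sigma>1 \<sigma>2 \<tau> \<tau>1 \<tau>2"
    using pattern_if_infinitely_many_accepted_prefixes[OF assms(1,2)] by blast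
qed

end
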